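(* Let $K$ be a $p$-adic number field and $f\in\mathcal{A}_K[1,1]$. Let $q$ be a positive power of $p$, and assume there exist $\zeta,\zeta'\in\mu_\infty$ with $f(\zeta)=\zeta'$. If $f(X)^q=f(X^q)$ (as Laurent series), then $f$ is special.
   Context: $\mathbb{C}_p$ is the completion of an algebraic closure of $\mathbb{Q}_p$ containing $K$; $\mu_\infty$ is the group of roots of unity in $\mathbb{C}_p$. $\mathcal{A}_K[1,1]$ is the set of Laurent series $\sum_{n\in\mathbb{Z}}f_nX^n$ with $f_n\in K$ and $|f_n|_p\to0$ as $|n|\to\infty$. $f$ is special if $f=\eta X^m$ for some $\eta\in\mu_\infty$ and $m\in\mathbb{Z}$. *)

theory Defs
  imports Complex_Main "HOL-Computational_Algebra.Polynomial"
begin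

text \<open>We work inside an abstract field L (type 'a) carrying an absolute value av.
  The predicate is_Cp characterises (L, av) up to isometric isomorphism as C_p:
  char 0, non-archimedean, |p| = 1/p, complete, algebraically closed, and the
  elements algebraic over Q are dense.\<close>

definition av_lim :: "('a::field \<Rightarrow> real) \<Rightarrow> (nat \<Rightarrow> 'a) \<Rightarrow> 'a \<Rightarrow> bool" where
  "av_lim av s l \<longleftrightarrow> (\<forall>e>0. \<exists>N. \<forall>n\<ge>N. av (s n - l) < e)"

definition av_cauchy :: "('a::field \<Rightarrow> real) \<Rightarrow> (nat \<Rightarrow> 'a) \<Rightarrow> bool" where
  "av_cauchy av s \<longleftrightarrow> (\<forall>e>0. \<exists>N. \<forall>m\<ge>N. \<forall>n\<ge>N. av (s m - s n) < e)"

definition algebraic_over_Q :: "'a::field_char_0 \<Rightarrow> bool" where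
  "algebraic_over_Q x \<longleftrightarrow>
     (\<exists>P::'a poly. P \<noteq> 0 \<and> (\<forall>i. coeff P i \<in> \<rat>) \<and> poly P x = 0)"

definition is_Cp :: "nat \<Rightarrow> ('a::field_char_0 \<Rightarrow> real) \<Rightarrow> bool" where
  "is_Cp p av \<longleftrightarrow>
     prime p \<and>
     (\<forall>x. av x \<ge> 0) \<and> (\<forall>x. av x = 0 \<longleftrightarrow> x = 0) \<and>
     (\<forall>x y. av (x * y) = av x * av y) \<and>
     (\<forall>x y. av (x + y) \<le> max (av x) (av y)) \<and>
     av (of_nat p) = 1 / real p \<and>
     (\<forall>s. av_cauchy av s \<longrightarrow> (\<exists>l. av_lim av s l)) \<and>
     (\<forall>P::'a poly. degree P > 0 \<longrightarrow> (\<exists>x. poly P x = 0)) \<and>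
     (\<forall>x. \<exists>s. (\<forall>n. algebraic_over_Q (s n)) \<and> av_lim av s x)"

text \<open>The copy of Q_p inside L: the closure of Q.\<close>
definition Qp_in :: "('a::field_char_0 \<Rightarrow> real) \<Rightarrow> 'a set" where
  "Qp_in av = {x. \<exists>s. (\<forall>n. s n \<in> \<rat>) \<and> av_lim av s x}"

definition padic_number_field :: "('a::field_char_0 \<Rightarrow> real) \<Rightarrow> 'a set \<Rightarrow> bool" where
  "padic_number_field av K \<longleftrightarrow>
     0 \<in> K \<and> 1 \<in> K \<and>
     (\<forall>x\<in>K. \<forall>y\<in>K. x + y \<in> K \<and> x * y \<in> K) \<and>
     (\<forall>x\<in>K. - x \<in> K \<and> inverse x \<in> K) \<and>
     Qp_in av \<subseteq> K \<and>
     (\<exists>B. finite B \<and> B \<subseteq> K \<and>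
        (\<forall>x\<in>K. \<exists>c. (\<forall>b\<in>B. c b \<in> Qp_in av) \<and> x = (\<Sum>b\<in>B. c b * b)))"

definition roots_of_unity :: "'a::field set" where
  "roots_of_unity = {z. \<exists>n>0. z ^ n = 1}"

text \<open>Laurent series are coefficient functions int => 'a. A_K[1,1]:\<close>
definition A_K11 :: "('a::field_char_0 \<Rightarrow> real) \<Rightarrow> 'a set \<Rightarrow> (int \<Rightarrow> 'a) \<Rightarrow> bool" where
  "A_K11 av K f \<longleftrightarrow> (\<forall>n. f n \<in> K) \<and>
     (\<forall>e>0. \<exists>N::nat. \<forall>n. \<bar>n\<bar> \<ge> int N \<longrightarrow> av (f n) < e)"

definition laurent_eval_to :: "('a::field_char_0 \<Rightarrow> real) \<Rightarrow> (int \<Rightarrow> 'a) \<Rightarrow> 'a \<Rightarrow> 'a \<Rightarrow> bool" where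
  "laurent_eval_to av f z v \<longleftrightarrow>
     av_lim av (\<lambda>N. \<Sum>n\<in>{- int N..int N}. f n * z powi n) v"

definition laurent_mult :: "('a::field_char_0 \<Rightarrow> real) \<Rightarrow> (int \<Rightarrow> 'a) \<Rightarrow> (int \<Rightarrow> 'a) \<Rightarrow> int \<Rightarrow> 'a" where
  "laurent_mult av f g n =
     (THE l. av_lim av (\<lambda>N. \<Sum>k\<in>{- int N..int N}. f k * g (n - k)) l)"

definition laurent_one :: "int \<Rightarrow> 'a::field" where
  "laurent_one n = (if n = 0 then 1 else 0)"

primrec laurent_pow :: "('a::field_char_0 \<Rightarrow> real) \<Rightarrow> (int \<Rightarrow> 'a) \<Rightarrow> nat \<Rightarrow> int \<Rightarrow> 'a" where
  "laurent_pow av f 0 = laurent_one"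
| "laurent_pow av f (Suc m) = laurent_mult av (laurent_pow av f m) f"

definition laurent_subst_pow :: "(int \<Rightarrow> 'a::zero) \<Rightarrow> nat \<Rightarrow> int \<Rightarrow> 'a" where
  "laurent_subst_pow f q n = (if int q dvd n then f (n div int q) else 0)"

definition special :: "(int \<Rightarrow> 'a::field) \<Rightarrow> bool" where
  "special f \<longleftrightarrow> (\<exists>\<eta>\<in>roots_of_unity. \<exists>m::int. f = (\<lambda>n. if n = m then \<eta> else 0))"

end

theory Submission
  imports Defs
begin

text \<open>
  Let \<theta> = X d/dX act on the ring of Laurent series whose coefficients tend to 0 in both
  directions; it is a derivation. Applying \<theta> to f^q = f(X^q) gives q f^(q-1) \<theta>f = q (\<theta>f)(X^q),
  and multiplying by f yields \<theta>f \<cdot> f(X^q) = (\<theta>f)(X^q) \<cdot> f.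

  Call the first index at which |F_n| is maximal the leading index of F. Since the absolute value is
  non-archimedean, leading indices add under multiplication (Gauss's lemma), and F(X^q) has q times
  the leading index of F. If H \<cdot> f(X^q) = H(X^q) \<cdot> f and H vanishes at the leading index a of f,
  then a nonzero H with leading index b would satisfy b + q a = q b + a, i.e. b = a, which is absurd.
  Hence for q > 1 every such H is a scalar multiple of f. For H = \<theta>f this says n f_n = c f_n for
  all n, so f = \<eta> X^m; then \<eta>^q = \<eta> and \<eta> \<noteq> 0, so \<eta> is a root of unity.

  Only completeness and the ultrametric inequality of the absolute value are used, and the
  hypothesis f(\<zeta>) = \<zeta>' serves only to guarantee f \<noteq> 0.
\<close>

section \<open>Complete non-archimedean absolute values\<close>

locale nonarch_complete_field =
  fixes av :: "'a::field_char_0 \<Rightarrow> real"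
  assumes av_nonneg: "av x \<ge> 0"
    and av_eq_0_iff: "av x = 0 \<longleftrightarrow> x = 0"
    and av_mult: "av (x * y) = av x * av y"
    and av_add_le_max: "av (x + y) \<le> max (av x) (av y)"
    and av_cauchy_imp_lim: "av_cauchy av s \<Longrightarrow> \<exists>l. av_lim av s l"
begin

lemma av_0 [simp]: "av 0 = 0"
  using av_eq_0_iff by simp

lemma av_pos: "x \<noteq> 0 \<Longrightarrow> av x > 0"
  using av_eq_0_iff av_nonneg by (metis order_le_less)

lemma av_1 [simp]: "av 1 = 1"
proof -
  have "av 1 * av 1 = av 1"
    using av_mult[of 1 1] by simp
  moreover have "av 1 > 0"
    using av_pos by simp
  ultimately show ?thesis
    by auto
qed

lemma av_minus [simp]: "av (- x) = av x"
proof -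
  have "av (- 1) * av (- 1) = 1"
    using av_mult[of "- 1" "- 1"] by simp
  then have "av (- 1) = 1"
    using av_nonneg[of "- 1"] power2_eq_1_iff[of "av (- 1)"] by (auto simp: power2_eq_square)
  then show ?thesis
    using av_mult[of "- 1" x] by simp
qed

lemma av_diff_commute: "av (x - y) = av (y - x)"
  by (metis av_minus minus_diff_eq)

lemma av_diff_le_trans: "av (x - y) \<le> e \<Longrightarrow> av (y - z) \<le> e \<Longrightarrow> av (x - z) \<le> e"
  using av_add_le_max[of "x - y" "y - z"] by simp

lemma av_of_int_le_1: "av (of_int n) \<le> 1"
proof -
  have nat: "av (of_nat m) \<le> 1" for m
    by (induction m) (auto intro: order_trans[OF av_add_le_max])
  show ?thesis
  proof (cases "n \<ge> 0")
    case True
    then show ?thesis using nat[of "nat n"] by simp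
  next
    case False
    then have "of_int n = - (of_nat (nat (- n)) :: 'a)" by simp
    then show ?thesis using nat[of "nat (- n)"] by simp
  qed
qed

lemma av_sum_le:
  assumes "finite S" "e \<ge> 0" "\<And>k. k \<in> S \<Longrightarrow> av (c k) \<le> e"
  shows "av (sum c S) \<le> e"
  using assms by (induction S rule: finite_induct) (auto intro: order_trans[OF av_add_le_max])

lemma av_add_eq_left:
  assumes "av y < av x" shows "av (x + y) = av x"
proof -
  have "av x \<le> max (av (x + y)) (av (- y))"
    using av_add_le_max[of "x + y" "- y"] by simp
  then show ?thesis
    using av_add_le_max[of x y] assms by auto
qed

lemma eq_if_av_diff_le:
  assumes "\<And>e. e > 0 \<Longrightarrow> av (x - y) \<le> e" shows "x = y"
proof (rule ccontr)
  assume "x \<noteq> y"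
  then have "av (x - y) > 0" by (simp add: av_pos)
  with assms[of "av (x - y) / 2"] show False by simp
qed

lemma av_lim_unique:
  assumes "av_lim av s l" "av_lim av s m" shows "l = m"
proof (rule eq_if_av_diff_le)
  fix e :: real assume "e > 0"
  then obtain N1 N2 where "\<forall>n\<ge>N1. av (s n - l) < e" "\<forall>n\<ge>N2. av (s n - m) < e"
    using assms unfolding av_lim_def by meson
  then have "av (l - s (max N1 N2)) \<le> e" "av (s (max N1 N2) - m) \<le> e"
    by (auto simp: av_diff_commute[of l] less_imp_le)
  then show "av (l - m) \<le> e" by (rule av_diff_le_trans)
qed

lemma av_lim_eventually_const:
  assumes "\<And>n. n \<ge> N \<Longrightarrow> s n = l" shows "av_lim av s l"
  unfolding av_lim_def using assms by (intro allI impI exI[of _ N]) simp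

lemma av_lim_add:
  assumes "av_lim av s l" "av_lim av t m"
  shows "av_lim av (\<lambda>n. s n + t n) (l + m)"
  unfolding av_lim_def
proof (intro allI impI)
  fix e :: real assume "e > 0"
  then obtain N1 N2 where N: "\<forall>n\<ge>N1. av (s n - l) < e" "\<forall>n\<ge>N2. av (t n - m) < e"
    using assms unfolding av_lim_def by meson
  have "av (s n + t n - (l + m)) < e" if "n \<ge> max N1 N2" for n
  proof -
    have "av (s n + t n - (l + m)) \<le> max (av (s n - l)) (av (t n - m))"
      unfolding add_diff_add by (rule av_add_le_max)
    also have "\<dots> < e"
      using N that by simp
    finally show ?thesis .
  qed
  then show "\<exists>N. \<forall>n\<ge>N. av (s n + t n - (l + m)) < e" by (intro exI[of _ "max N1 N2"]) simp
qed

lemma av_lim_cmult: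
  assumes "av_lim av s l"
  shows "av_lim av (\<lambda>n. x * s n) (x * l)"
proof (cases "x = 0")
  case True
  then show ?thesis unfolding av_lim_def by simp
next
  case False
  then have x: "av x > 0" by (rule av_pos)
  show ?thesis unfolding av_lim_def
  proof (intro allI impI)
    fix e :: real assume "e > 0"
    then obtain N where N: "\<forall>n\<ge>N. av (s n - l) < e / av x"
      using assms x unfolding av_lim_def by (meson divide_pos_pos)
    have "av (x * s n - x * l) < e" if "n \<ge> N" for n
    proof -
      have "av (x * s n - x * l) = av x * av (s n - l)"
        by (simp add: right_diff_distrib[symmetric] av_mult)
      also have "\<dots> < e"
        using N that x by (simp add: pos_less_divide_eq mult.commute)
      finally show ?thesis .
    qed
    then show "\<exists>N. \<forall>n\<ge>N. av (x * s n - x * l) < e" by (intro exI[of _ N]) simp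
  qed
qed

lemma av_lim_le:
  assumes "av_lim av s l" "e \<ge> 0" "\<And>n. n \<ge> N \<Longrightarrow> av (s n - y) \<le> e"
  shows "av (l - y) \<le> e"
proof (rule ccontr)
  assume "\<not> av (l - y) \<le> e"
  then have "av (l - y) > 0"
    using assms(2) by linarith
  then obtain N' where N': "\<forall>n\<ge>N'. av (s n - l) < av (l - y)"
    using assms(1) unfolding av_lim_def by blast
  let ?n = "max N N'"
  have "av (l - s ?n) < av (l - y)"
    using N' by (simp add: av_diff_commute[of l])
  moreover have "av (s ?n - y) < av (l - y)"
    using assms(3)[of ?n] \<open>\<not> av (l - y) \<le> e\<close> by simp
  moreover have "av (l - y) \<le> max (av (l - s ?n)) (av (s ?n - y))"
    using av_add_le_max[of "l - s ?n" "s ?n - y"] by simp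
  ultimately show False
    by (auto simp: le_max_iff_disj)
qed

end


section \<open>Summation over the integers\<close>

definition vanishing :: "('a \<Rightarrow> real) \<Rightarrow> (int \<Rightarrow> 'a) \<Rightarrow> bool" where
  "vanishing av c \<longleftrightarrow> (\<forall>e>0. \<exists>M. \<forall>k. M < \<bar>k\<bar> \<longrightarrow> av (c k) \<le> e)"

definition partial_zsum :: "(int \<Rightarrow> 'a::comm_monoid_add) \<Rightarrow> nat \<Rightarrow> 'a" where
  "partial_zsum c N = (\<Sum>k\<in>{- int N..int N}. c k)"

text \<open>The value of \<open>zsum av c\<close> is unspecified unless the symmetric partial sums converge.\<close>

definition zsum :: "('a::field \<Rightarrow> real) \<Rightarrow> (int \<Rightarrow> 'a) \<Rightarrow> 'a" where
  "zsum av c = (THE l. av_lim av (partial_zsum c) l)"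

definition laurent_monom :: "int \<Rightarrow> 'a::zero \<Rightarrow> int \<Rightarrow> 'a" where
  "laurent_monom a x = (\<lambda>n. if n = a then x else 0)"

lemma vanishing_reflect:
  assumes "vanishing av c" shows "vanishing av (\<lambda>k. c (t - k))"
  unfolding vanishing_def
proof (intro allI impI)
  fix e :: real assume "e > 0"
  then obtain M where "\<forall>k. M < \<bar>k\<bar> \<longrightarrow> av (c k) \<le> e"
    using assms unfolding vanishing_def by blast
  then show "\<exists>M. \<forall>k. M < \<bar>k\<bar> \<longrightarrow> av (c (t - k)) \<le> e"
    by (intro exI[of _ "M + \<bar>t\<bar>"]) auto
qed

lemma vanishing_le:
  assumes "vanishing av c" "\<And>k. av (d k) \<le> av (c k)" shows "vanishing av d"
  using assms unfolding vanishing_def by (meson order_trans)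

lemma vanishing_scaled:
  assumes "vanishing av c" "B > 0" "e > 0"
  shows "\<exists>M. \<forall>k. M < \<bar>k\<bar> \<longrightarrow> B * av (c k) \<le> e"
proof -
  obtain M where "\<forall>k. M < \<bar>k\<bar> \<longrightarrow> av (c k) \<le> e / B"
    using assms unfolding vanishing_def by (meson divide_pos_pos)
  then have "\<forall>k. M < \<bar>k\<bar> \<longrightarrow> B * av (c k) \<le> e"
    using assms(2) by (simp add: pos_le_divide_eq mult.commute)
  then show ?thesis by blast
qed

context nonarch_complete_field
begin

lemma vanishing_laurent_monom: "vanishing av (laurent_monom a x)"
  unfolding vanishing_def laurent_monom_def by (intro allI impI exI[of _ "\<bar>a\<bar>"]) auto

lemma vanishing_finite_ge:
  assumes "vanishing av c" "e > 0" shows "finite {k. e \<le> av (c k)}"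
proof -
  obtain M where M: "\<forall>k. M < \<bar>k\<bar> \<longrightarrow> av (c k) \<le> e / 2"
    using assms unfolding vanishing_def by (meson half_gt_zero)
  have "k \<in> {-M..M}" if "e \<le> av (c k)" for k
  proof (rule ccontr)
    assume "k \<notin> {-M..M}"
    then have "M < \<bar>k\<bar>"
      by auto
    then have "av (c k) \<le> e / 2"
      using M by blast
    then show False
      using that \<open>e > 0\<close> by linarith
  qed
  then have "{k. e \<le> av (c k)} \<subseteq> {-M..M}"
    by blast
  then show ?thesis
    by (rule finite_subset) simp
qed

lemma vanishing_max_attained:
  assumes "vanishing av c"
  shows "\<exists>k0. \<forall>k. av (c k) \<le> av (c k0)"
proof (cases "c = (\<lambda>_. 0)")
  case True
  then show ?thesis by simp
next
  case False
  then obtain n0 where "c n0 \<noteq> 0" by auto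
  define S where "S = {k. av (c n0) \<le> av (c k)}"
  have "finite S"
    unfolding S_def using assms av_pos[OF \<open>c n0 \<noteq> 0\<close>] by (rule vanishing_finite_ge)
  moreover have "n0 \<in> S"
    by (simp add: S_def)
  ultimately obtain k0 where k0: "Max ((\<lambda>k. av (c k)) ` S) = av (c k0)"
    using obtains_MAX by blast
  have in_S: "av (c k) \<le> av (c k0)" if "k \<in> S" for k
    unfolding k0[symmetric] using \<open>finite S\<close> that by (intro Max_ge) auto
  have "av (c k) \<le> av (c k0)" for k
  proof (cases "k \<in> S")
    case False
    then have "av (c k) < av (c n0)"
      by (simp add: S_def)
    also have "\<dots> \<le> av (c k0)"
      using in_S[OF \<open>n0 \<in> S\<close>] .
    finally show ?thesis
      by simp
  qed (rule in_S)
  then show ?thesis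
    by blast
qed

lemma vanishing_bounded:
  assumes "vanishing av c"
  shows "\<exists>B>0. \<forall>k. av (c k) \<le> B"
proof -
  obtain k0 where "\<forall>k. av (c k) \<le> av (c k0)"
    using vanishing_max_attained[OF assms] by blast
  then have "\<forall>k. av (c k) \<le> av (c k0) + 1"
    by (meson add_increasing2 zero_le_one order_trans)
  then show ?thesis
    using av_nonneg[of "c k0"] by (intro exI[of _ "av (c k0) + 1"]) simp
qed

lemma vanishing_add:
  assumes "vanishing av c" "vanishing av d" shows "vanishing av (\<lambda>k. c k + d k)"
  unfolding vanishing_def
proof (intro allI impI)
  fix e :: real assume "e > 0"
  then obtain M1 M2 where "\<forall>k. M1 < \<bar>k\<bar> \<longrightarrow> av (c k) \<le> e" "\<forall>k. M2 < \<bar>k\<bar> \<longrightarrow> av (d k) \<le> e"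
    using assms unfolding vanishing_def by meson
  then have "av (c k + d k) \<le> e" if "max M1 M2 < \<bar>k\<bar>" for k
    using that av_add_le_max[of "c k" "d k"] by (auto simp: le_max_iff_disj)
  then show "\<exists>M. \<forall>k. M < \<bar>k\<bar> \<longrightarrow> av (c k + d k) \<le> e"
    by (intro exI[of _ "max M1 M2"]) blast
qed

lemma vanishing_cmult:
  assumes "vanishing av c" shows "vanishing av (\<lambda>k. x * c k)"
proof (cases "x = 0")
  case True
  then show ?thesis unfolding vanishing_def by simp
next
  case False
  show ?thesis
    unfolding vanishing_def
  proof (intro allI impI)
    fix e :: real assume "e > 0"
    then obtain M where "\<forall>k. M < \<bar>k\<bar> \<longrightarrow> av x * av (c k) \<le> e"
      using vanishing_scaled[OF assms av_pos[OF False]] by blast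
    then show "\<exists>M. \<forall>k. M < \<bar>k\<bar> \<longrightarrow> av (x * c k) \<le> e"
      by (intro exI[of _ M]) (simp add: av_mult)
  qed
qed

lemma partial_zsum_cauchy:
  assumes "vanishing av c" shows "av_cauchy av (partial_zsum c)"
  unfolding av_cauchy_def
proof (intro allI impI)
  fix e :: real assume "e > 0"
  then obtain M where M: "\<forall>k. M < \<bar>k\<bar> \<longrightarrow> av (c k) \<le> e / 2"
    using assms unfolding vanishing_def by (meson half_gt_zero)
  have ordered: "av (partial_zsum c m - partial_zsum c n) \<le> e / 2" if "nat M \<le> n" "n \<le> m" for m n
  proof -
    have "partial_zsum c m - partial_zsum c n = sum c ({- int m..int m} - {- int n..int n})"
      unfolding partial_zsum_def using that(2) by (subst sum_diff) auto
    also have "av \<dots> \<le> e / 2"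
      using M that \<open>e > 0\<close> by (intro av_sum_le) auto
    finally show ?thesis .
  qed
  have "av (partial_zsum c m - partial_zsum c n) < e" if "nat M \<le> m" "nat M \<le> n" for m n
    using ordered[of n m] ordered[of m n] that \<open>e > 0\<close> av_diff_commute[of "partial_zsum c m"]
    by (cases "n \<le> m") auto
  then show "\<exists>N. \<forall>m\<ge>N. \<forall>n\<ge>N. av (partial_zsum c m - partial_zsum c n) < e"
    by (intro exI[of _ "nat M"]) blast
qed

lemma zsum_lim:
  assumes "vanishing av c" shows "av_lim av (partial_zsum c) (zsum av c)"
proof -
  obtain l where l: "av_lim av (partial_zsum c) l"
    using av_cauchy_imp_lim partial_zsum_cauchy[OF assms] by blast
  then show ?thesis
    unfolding zsum_def by (rule theI) (use l av_lim_unique in blast)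
qed

lemma zsum_tail:
  assumes "vanishing av c" "e \<ge> 0" "\<And>k. M < \<bar>k\<bar> \<Longrightarrow> av (c k) \<le> e"
    and "finite S" "{-M..M} \<subseteq> S"
  shows "av (zsum av c - sum c S) \<le> e"
proof -
  obtain K where "abs ` S \<subseteq> {..K}"
    using \<open>finite S\<close> finite_int_iff_bounded_le by blast
  then have K: "\<bar>x\<bar> \<le> K" if "x \<in> S" for x
    using that by blast
  show ?thesis
  proof (rule av_lim_le[OF zsum_lim[OF assms(1)] assms(2)])
    fix n assume "nat K \<le> n"
    then have "S \<subseteq> {- int n..int n}"
      using K by (force simp: nat_le_iff abs_le_iff)
    then have "partial_zsum c n - sum c S = sum c ({- int n..int n} - S)"
      unfolding partial_zsum_def using \<open>finite S\<close> by (subst sum_diff) auto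
    also have "av \<dots> \<le> e"
    proof (intro av_sum_le assms(2,3))
      fix k assume "k \<in> {- int n..int n} - S"
      then have "k \<notin> {-M..M}"
        using assms(5) by blast
      then show "M < \<bar>k\<bar>" by auto
    qed simp
    finally show "av (partial_zsum c n - sum c S) \<le> e" .
  qed
qed

lemma av_zsum_le:
  assumes "vanishing av c" "e \<ge> 0" "\<And>k. av (c k) \<le> e"
  shows "av (zsum av c) \<le> e"
  using zsum_tail[OF assms(1,2), of "-1" "{}"] assms(3) by simp

lemma av_zsum_less:
  assumes "vanishing av c" "\<And>k. av (c k) < T"
  shows "av (zsum av c) < T"
proof -
  obtain k0 where "\<forall>k. av (c k) \<le> av (c k0)"
    using vanishing_max_attained[OF assms(1)] by blast
  then have "av (zsum av c) \<le> av (c k0)"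
    using assms(1) av_nonneg by (intro av_zsum_le) auto
  then show ?thesis
    using assms(2)[of k0] by linarith
qed

lemma zsum_add:
  assumes "vanishing av c" "vanishing av d"
  shows "zsum av (\<lambda>k. c k + d k) = zsum av c + zsum av d"
proof -
  have "av_lim av (\<lambda>n. partial_zsum c n + partial_zsum d n) (zsum av c + zsum av d)"
    using zsum_lim[OF assms(1)] zsum_lim[OF assms(2)] by (rule av_lim_add)
  moreover have "(\<lambda>n. partial_zsum c n + partial_zsum d n) = partial_zsum (\<lambda>k. c k + d k)"
    unfolding partial_zsum_def by (simp add: sum.distrib)
  ultimately show ?thesis
    using zsum_lim[OF vanishing_add[OF assms]] av_lim_unique by metis
qed

lemma zsum_cmult:
  assumes "vanishing av c"
  shows "zsum av (\<lambda>k. x * c k) = x * zsum av c"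
proof -
  have "av_lim av (\<lambda>n. x * partial_zsum c n) (x * zsum av c)"
    using zsum_lim[OF assms] by (rule av_lim_cmult)
  moreover have "(\<lambda>n. x * partial_zsum c n) = partial_zsum (\<lambda>k. x * c k)"
    unfolding partial_zsum_def by (simp add: sum_distrib_left)
  ultimately show ?thesis
    using zsum_lim[OF vanishing_cmult[OF assms]] av_lim_unique by metis
qed

lemma zsum_laurent_monom: "zsum av (laurent_monom a x) = x"
proof -
  have "av_lim av (partial_zsum (laurent_monom a x)) x"
  proof (rule av_lim_eventually_const)
    fix n assume "nat \<bar>a\<bar> \<le> n"
    then have "a \<in> {- int n..int n}" by auto
    then show "partial_zsum (laurent_monom a x) n = x"
      by (simp add: partial_zsum_def laurent_monom_def)
  qed
  then show ?thesis
    using zsum_lim[OF vanishing_laurent_monom] av_lim_unique by metis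
qed

lemma av_zsum_dominant:
  assumes c: "vanishing av c" and dominant: "\<And>k. k \<noteq> a \<Longrightarrow> av (c k) < av (c a)"
  shows "av (zsum av c) = av (c a)"
proof -
  define c' where "c' k = (if k = a then 0 else c k)" for k
  have "vanishing av c'"
    using c by (rule vanishing_le) (simp add: c'_def av_nonneg)
  have "av (c a) > 0"
    using dominant[of "a + 1"] av_nonneg[of "c (a + 1)"] by simp
  then have "av (c' k) < av (c a)" for k
    using dominant by (simp add: c'_def)
  then have "av (zsum av c') < av (c a)"
    by (rule av_zsum_less[OF \<open>vanishing av c'\<close>])
  have "zsum av c = zsum av (\<lambda>k. laurent_monom a (c a) k + c' k)"
    by (rule arg_cong[where f = "zsum av"]) (auto simp: c'_def laurent_monom_def)
  also have "\<dots> = c a + zsum av c'"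
    using zsum_add[OF vanishing_laurent_monom \<open>vanishing av c'\<close>] by (simp add: zsum_laurent_monom)
  finally show ?thesis
    using \<open>av (zsum av c') < av (c a)\<close> by (simp add: av_add_eq_left)
qed

lemma zsum_reflect:
  assumes c: "vanishing av c" shows "zsum av (\<lambda>k. c (t - k)) = zsum av c"
proof (rule eq_if_av_diff_le)
  fix e :: real assume "e > 0"
  then obtain M where M: "\<forall>k. M < \<bar>k\<bar> \<longrightarrow> av (c k) \<le> e"
    using c unfolding vanishing_def by blast
  define R where "R = \<bar>M\<bar> + \<bar>t\<bar>"
  have "(\<Sum>k\<in>{-R..R}. c (t - k)) = sum c {t - R..t + R}"
    by (rule sum.reindex_bij_witness[of _ "\<lambda>k. t - k" "\<lambda>k. t - k"]) auto
  moreover have "av (zsum av (\<lambda>k. c (t - k)) - (\<Sum>k\<in>{-R..R}. c (t - k))) \<le> e"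
    using M \<open>e > 0\<close> by (intro zsum_tail[OF vanishing_reflect[OF c]]) (auto simp: R_def)
  ultimately have "av (zsum av (\<lambda>k. c (t - k)) - sum c {t - R..t + R}) \<le> e"
    by simp
  moreover have "av (sum c {t - R..t + R} - zsum av c) \<le> e"
    using M \<open>e > 0\<close> by (subst av_diff_commute, intro zsum_tail[OF c]) (auto simp: R_def)
  ultimately show "av (zsum av (\<lambda>k. c (t - k)) - zsum av c) \<le> e"
    by (rule av_diff_le_trans)
qed

lemma iterated_zsum_approx:
  assumes decay: "\<And>e. e > 0 \<Longrightarrow> \<exists>M. \<forall>j k. M < \<bar>j\<bar> \<or> M < \<bar>k\<bar> \<longrightarrow> av (d j k) \<le> e"
    and "e > 0" and M: "\<forall>j k. M < \<bar>j\<bar> \<or> M < \<bar>k\<bar> \<longrightarrow> av (d j k) \<le> e"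
  shows "av (zsum av (\<lambda>j. zsum av (d j)) - (\<Sum>j\<in>{-M..M}. \<Sum>k\<in>{-M..M}. d j k)) \<le> e"
proof -
  have rows: "vanishing av (d j)" for j
    unfolding vanishing_def using decay by meson
  have "vanishing av (\<lambda>j. zsum av (d j))"
    unfolding vanishing_def
  proof (intro allI impI)
    fix e' :: real assume "e' > 0"
    then obtain M' where "\<forall>j k. M' < \<bar>j\<bar> \<or> M' < \<bar>k\<bar> \<longrightarrow> av (d j k) \<le> e'"
      using decay by blast
    then show "\<exists>M. \<forall>j. M < \<bar>j\<bar> \<longrightarrow> av (zsum av (d j)) \<le> e'"
      using \<open>e' > 0\<close> by (intro exI[of _ M'] allI impI av_zsum_le[OF rows]) auto
  qed
  then have "av (zsum av (\<lambda>j. zsum av (d j)) - (\<Sum>j\<in>{-M..M}. zsum av (d j))) \<le> e"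
    using M \<open>e > 0\<close> by (intro zsum_tail av_zsum_le[OF rows]) auto
  moreover have "av ((\<Sum>j\<in>{-M..M}. zsum av (d j)) - (\<Sum>j\<in>{-M..M}. \<Sum>k\<in>{-M..M}. d j k)) \<le> e"
    unfolding sum_subtractf[symmetric] using M \<open>e > 0\<close>
    by (intro av_sum_le zsum_tail[OF rows]) auto
  ultimately show ?thesis
    by (rule av_diff_le_trans)
qed

lemma zsum_swap:
  assumes decay: "\<And>e. e > 0 \<Longrightarrow> \<exists>M. \<forall>j k. M < \<bar>j\<bar> \<or> M < \<bar>k\<bar> \<longrightarrow> av (d j k) \<le> e"
  shows "zsum av (\<lambda>k. zsum av (\<lambda>j. d j k)) = zsum av (\<lambda>j. zsum av (\<lambda>k. d j k))"
proof (rule eq_if_av_diff_le)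
  fix e :: real assume "e > 0"
  then obtain M where M: "\<forall>j k. M < \<bar>j\<bar> \<or> M < \<bar>k\<bar> \<longrightarrow> av (d j k) \<le> e"
    using decay by blast
  have decay': "\<exists>M. \<forall>k j. M < \<bar>k\<bar> \<or> M < \<bar>j\<bar> \<longrightarrow> av (d j k) \<le> e'" if "e' > 0" for e'
    using decay[OF that] by blast
  have "av (zsum av (\<lambda>k. zsum av (\<lambda>j. d j k)) - (\<Sum>k\<in>{-M..M}. \<Sum>j\<in>{-M..M}. d j k)) \<le> e"
    using M \<open>e > 0\<close> by (intro iterated_zsum_approx[where d = "\<lambda>k j. d j k"] decay') auto
  moreover have "av ((\<Sum>j\<in>{-M..M}. \<Sum>k\<in>{-M..M}. d j k) - zsum av (\<lambda>j. zsum av (\<lambda>k. d j k))) \<le> e"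
    using M \<open>e > 0\<close> decay
    by (subst av_diff_commute, intro iterated_zsum_approx[where d = d]) auto
  ultimately show "av (zsum av (\<lambda>k. zsum av (\<lambda>j. d j k)) - zsum av (\<lambda>j. zsum av (\<lambda>k. d j k))) \<le> e"
    by (subst (asm) sum.swap) (rule av_diff_le_trans)
qed

end

section \<open>The ring of Laurent series\<close>

definition laurent_deriv :: "(int \<Rightarrow> 'a::ring_1) \<Rightarrow> int \<Rightarrow> 'a" where
  "laurent_deriv F = (\<lambda>n. of_int n * F n)"

lemma laurent_subst_pow_diff:
  "laurent_subst_pow (\<lambda>n. A n - c * B n :: 'a::ring) q
    = (\<lambda>n. laurent_subst_pow A q n - c * laurent_subst_pow B q n)"
  by (simp add: laurent_subst_pow_def fun_eq_iff)

lemma laurent_deriv_subst_pow: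
  assumes "q > 0"
  shows "laurent_deriv (laurent_subst_pow F q) = (\<lambda>n. of_nat q * laurent_subst_pow (laurent_deriv F) q n)"
  using assms by (auto simp: fun_eq_iff laurent_deriv_def laurent_subst_pow_def mult.assoc elim!: dvdE)

lemma eq_laurent_monom_if_deriv_proportional:
  fixes F :: "int \<Rightarrow> 'a::field_char_0"
  assumes "\<And>n. laurent_deriv F n = c * F n" and "F m \<noteq> 0"
  shows "F = laurent_monom m (F m)"
proof
  fix n
  show "F n = laurent_monom m (F m) n"
  proof (cases "F n = 0")
    case False
    then have "of_int n = c" "of_int m = c"
      using assms(1)[of n] assms(1)[of m] \<open>F m \<noteq> 0\<close> by (simp_all add: laurent_deriv_def)
    then have "n = m"
      by (metis of_int_eq_iff)
    then show ?thesis
      by (simp add: laurent_monom_def)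
  qed (auto simp: laurent_monom_def)
qed

context nonarch_complete_field
begin

lemma laurent_mult_eq_zsum: "laurent_mult av F G n = zsum av (\<lambda>k. F k * G (n - k))"
  by (simp add: laurent_mult_def zsum_def partial_zsum_def[abs_def])

lemma vanishing_convolution_term:
  assumes F: "vanishing av F" and G: "vanishing av G"
  shows "vanishing av (\<lambda>k. F k * G (n - k))"
  unfolding vanishing_def
proof (intro allI impI)
  fix e :: real assume "e > 0"
  obtain B where B: "B > 0" "\<forall>k. av (G k) \<le> B"
    using vanishing_bounded[OF G] by blast
  then obtain M where M: "\<forall>k. M < \<bar>k\<bar> \<longrightarrow> B * av (F k) \<le> e"
    using vanishing_scaled[OF F _ \<open>e > 0\<close>] by blast
  have "av (F k * G (n - k)) \<le> e" if "M < \<bar>k\<bar>" for k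
  proof -
    have "av (F k * G (n - k)) \<le> av (F k) * B"
      unfolding av_mult using B av_nonneg by (intro mult_left_mono) auto
    also have "\<dots> \<le> e"
      using M that by (simp add: mult.commute)
    finally show ?thesis .
  qed
  then show "\<exists>M. \<forall>k. M < \<bar>k\<bar> \<longrightarrow> av (F k * G (n - k)) \<le> e"
    by blast
qed

lemma vanishing_laurent_mult:
  assumes F: "vanishing av F" and G: "vanishing av G"
  shows "vanishing av (laurent_mult av F G)"
  unfolding vanishing_def
proof (intro allI impI)
  fix e :: real assume "e > 0"
  obtain BF BG where B: "BF > 0" "\<forall>k. av (F k) \<le> BF" "BG > 0" "\<forall>k. av (G k) \<le> BG"
    using vanishing_bounded[OF F] vanishing_bounded[OF G] by blast
  then obtain M1 M2 where M1: "\<forall>k. M1 < \<bar>k\<bar> \<longrightarrow> BG * av (F k) \<le> e"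
    and M2: "\<forall>k. M2 < \<bar>k\<bar> \<longrightarrow> BF * av (G k) \<le> e"
    using vanishing_scaled[OF F _ \<open>e > 0\<close>] vanishing_scaled[OF G _ \<open>e > 0\<close>] by meson
  have "av (laurent_mult av F G n) \<le> e" if n: "M1 + M2 < \<bar>n\<bar>" for n
    unfolding laurent_mult_eq_zsum
  proof (intro av_zsum_le[OF vanishing_convolution_term[OF F G]])
    fix k
    have "av (F k * G (n - k)) \<le> e" if "M1 < \<bar>k\<bar>"
    proof -
      have "av (F k * G (n - k)) \<le> av (F k) * BG"
        unfolding av_mult using B av_nonneg by (intro mult_left_mono) auto
      also have "\<dots> \<le> e"
        using M1 that by (simp add: mult.commute)
      finally show ?thesis .
    qed
    moreover have "av (F k * G (n - k)) \<le> e" if "M2 < \<bar>n - k\<bar>"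
    proof -
      have "av (F k * G (n - k)) \<le> BF * av (G (n - k))"
        unfolding av_mult using B av_nonneg by (intro mult_right_mono) auto
      also have "\<dots> \<le> e"
        using M2 that by simp
      finally show ?thesis .
    qed
    ultimately show "av (F k * G (n - k)) \<le> e"
      using n by linarith
  qed (use \<open>e > 0\<close> in simp)
  then show "\<exists>M. \<forall>n. M < \<bar>n\<bar> \<longrightarrow> av (laurent_mult av F G n) \<le> e"
    by blast
qed

lemma laurent_mult_commute:
  assumes "vanishing av F" "vanishing av G"
  shows "laurent_mult av F G = laurent_mult av G F"
proof
  fix n
  have "laurent_mult av G F n = zsum av (\<lambda>k. (\<lambda>k. F k * G (n - k)) (n - k))"
    unfolding laurent_mult_eq_zsum by (simp add: mult.commute)
  also have "\<dots> = laurent_mult av F G n"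
    unfolding laurent_mult_eq_zsum by (rule zsum_reflect[OF vanishing_convolution_term[OF assms]])
  finally show "laurent_mult av F G n = laurent_mult av G F n" by simp
qed

lemma av_triple_product_small:
  assumes F: "vanishing av F" and G: "vanishing av G" and H: "vanishing av H" and "e > 0"
  shows "\<exists>M. \<forall>i j k. M < \<bar>j\<bar> \<or> M < \<bar>k\<bar> \<longrightarrow> av (F j * G i * H k) \<le> e"
proof -
  obtain BF BG BH where B: "BF > 0" "\<forall>k. av (F k) \<le> BF" "BG > 0" "\<forall>k. av (G k) \<le> BG"
    "BH > 0" "\<forall>k. av (H k) \<le> BH"
    using vanishing_bounded[OF F] vanishing_bounded[OF G] vanishing_bounded[OF H] by blast
  then obtain M1 M3 where M1: "\<forall>j. M1 < \<bar>j\<bar> \<longrightarrow> (BG * BH) * av (F j) \<le> e"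
    and M3: "\<forall>k. M3 < \<bar>k\<bar> \<longrightarrow> (BF * BG) * av (H k) \<le> e"
    using vanishing_scaled[OF F _ \<open>e > 0\<close>] vanishing_scaled[OF H _ \<open>e > 0\<close>]
    by (meson mult_pos_pos)
  have "av (F j * G i * H k) \<le> e" if "max M1 M3 < \<bar>j\<bar> \<or> max M1 M3 < \<bar>k\<bar>" for i j k
  proof -
    have "av (F j * G i * H k) \<le> av (F j) * BG * av (H k)"
      unfolding av_mult using B av_nonneg by (intro mult_right_mono mult_left_mono) auto
    also have "\<dots> \<le> e"
    proof (cases "M1 < \<bar>j\<bar>")
      case True
      have "av (F j) * BG * av (H k) \<le> av (F j) * BG * BH"
        using B av_nonneg by (intro mult_left_mono) auto
      also have "\<dots> \<le> e"
        using M1 True by (simp add: ac_simps)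
      finally show ?thesis .
    next
      case False
      then have "M3 < \<bar>k\<bar>"
        using that by auto
      have "av (F j) * BG * av (H k) \<le> BF * BG * av (H k)"
        using B av_nonneg by (intro mult_right_mono) auto
      also have "\<dots> \<le> e"
        using M3 \<open>M3 < \<bar>k\<bar>\<close> by simp
      finally show ?thesis .
    qed
    finally show ?thesis .
  qed
  then show ?thesis
    by blast
qed

lemma laurent_mult_assoc:
  assumes F: "vanishing av F" and G: "vanishing av G" and H: "vanishing av H"
  shows "laurent_mult av (laurent_mult av F G) H = laurent_mult av F (laurent_mult av G H)"
proof
  fix n
  define d where "d j k = F j * G (n - (j + k)) * H k" for j k
  have FG_H: "vanishing av (\<lambda>m. laurent_mult av F G m * H (n - m))"
    by (rule vanishing_convolution_term[OF vanishing_laurent_mult[OF F G] H])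
  have FG: "laurent_mult av F G (n - k) * H k = zsum av (\<lambda>j. d j k)" for k
  proof -
    have "laurent_mult av F G (n - k) * H k = H k * zsum av (\<lambda>j. F j * G (n - k - j))"
      by (simp add: laurent_mult_eq_zsum mult.commute)
    also have "\<dots> = zsum av (\<lambda>j. H k * (F j * G (n - k - j)))"
      by (rule zsum_cmult[OF vanishing_convolution_term[OF F G], symmetric])
    finally show ?thesis
      by (simp add: d_def algebra_simps)
  qed
  have GH: "laurent_mult av G H (n - j) = zsum av (\<lambda>k. G (n - (j + k)) * H k)" for j
    unfolding laurent_mult_eq_zsum zsum_reflect[OF vanishing_convolution_term[OF G H], of "n - j", symmetric]
    by (simp add: diff_diff_eq)
  have GH_terms: "vanishing av (\<lambda>k. G (n - (j + k)) * H k)" for j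
    using vanishing_reflect[OF vanishing_convolution_term[OF G H], of "n - j" "n - j"]
    by (simp add: diff_diff_eq)
  have "laurent_mult av (laurent_mult av F G) H n = zsum av (\<lambda>k. laurent_mult av F G (n - k) * H k)"
    unfolding laurent_mult_eq_zsum[of "laurent_mult av F G"] zsum_reflect[OF FG_H, of n, symmetric]
    by simp
  also have "\<dots> = zsum av (\<lambda>k. zsum av (\<lambda>j. d j k))"
    by (simp add: FG)
  also have "\<dots> = zsum av (\<lambda>j. zsum av (\<lambda>k. d j k))"
  proof (rule zsum_swap)
    fix e :: real assume "e > 0"
    then obtain M where "\<forall>i j k. M < \<bar>j\<bar> \<or> M < \<bar>k\<bar> \<longrightarrow> av (F j * G i * H k) \<le> e"
      using av_triple_product_small[OF F G H] by blast
    then show "\<exists>M. \<forall>j k. M < \<bar>j\<bar> \<or> M < \<bar>k\<bar> \<longrightarrow> av (d j k) \<le> e"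
      unfolding d_def by blast
  qed
  also have "\<dots> = laurent_mult av F (laurent_mult av G H) n"
    unfolding laurent_mult_eq_zsum[of F] GH d_def using GH_terms by (simp add: zsum_cmult mult.assoc)
  finally show "laurent_mult av (laurent_mult av F G) H n = laurent_mult av F (laurent_mult av G H) n" .
qed

lemma laurent_mult_cmult_left:
  assumes "vanishing av A" "vanishing av X"
  shows "laurent_mult av (\<lambda>n. c * A n) X = (\<lambda>n. c * laurent_mult av A X n)"
proof
  fix n
  have "laurent_mult av (\<lambda>n. c * A n) X n = zsum av (\<lambda>k. c * (A k * X (n - k)))"
    unfolding laurent_mult_eq_zsum by (simp add: mult.assoc)
  also have "\<dots> = c * laurent_mult av A X n"
    unfolding laurent_mult_eq_zsum by (rule zsum_cmult[OF vanishing_convolution_term[OF assms]])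
  finally show "laurent_mult av (\<lambda>n. c * A n) X n = c * laurent_mult av A X n" .
qed

lemma laurent_mult_diff_left:
  assumes "vanishing av A" "vanishing av B" "vanishing av X"
  shows "laurent_mult av (\<lambda>n. A n - c * B n) X = (\<lambda>n. laurent_mult av A X n - c * laurent_mult av B X n)"
proof
  fix n
  have "laurent_mult av (\<lambda>n. A n - c * B n) X n
      = zsum av (\<lambda>k. A k * X (n - k) + (- c) * (B k * X (n - k)))"
    unfolding laurent_mult_eq_zsum by (simp add: algebra_simps)
  also have "\<dots> = zsum av (\<lambda>k. A k * X (n - k)) + zsum av (\<lambda>k. (- c) * (B k * X (n - k)))"
    using vanishing_convolution_term[OF assms(1,3)] vanishing_convolution_term[OF assms(2,3)]
    by (intro zsum_add vanishing_cmult)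
  also have "zsum av (\<lambda>k. (- c) * (B k * X (n - k))) = (- c) * zsum av (\<lambda>k. B k * X (n - k))"
    by (rule zsum_cmult[OF vanishing_convolution_term[OF assms(2,3)]])
  finally show "laurent_mult av (\<lambda>n. A n - c * B n) X n = laurent_mult av A X n - c * laurent_mult av B X n"
    by (simp add: laurent_mult_eq_zsum)
qed

lemma laurent_one_mult: "laurent_mult av laurent_one F = F"
proof
  fix n
  have "(\<lambda>k. laurent_one k * F (n - k)) = laurent_monom 0 (F n)"
    by (auto simp: laurent_one_def laurent_monom_def)
  then show "laurent_mult av laurent_one F n = F n"
    unfolding laurent_mult_eq_zsum by (simp add: zsum_laurent_monom)
qed

lemma laurent_monom_mult:
  "laurent_mult av (laurent_monom a x) (laurent_monom b y) = laurent_monom (a + b) (x * y)"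
proof
  fix n
  have "(\<lambda>k. laurent_monom a x k * laurent_monom b y (n - k)) = laurent_monom a (laurent_monom (a + b) (x * y) n)"
    by (auto simp: laurent_monom_def)
  then show "laurent_mult av (laurent_monom a x) (laurent_monom b y) n = laurent_monom (a + b) (x * y) n"
    unfolding laurent_mult_eq_zsum by (simp add: zsum_laurent_monom)
qed

lemma vanishing_laurent_pow:
  assumes "vanishing av F" shows "vanishing av (laurent_pow av F m)"
proof (induction m)
  case 0
  have one: "laurent_one = laurent_monom 0 (1::'a)"
    by (auto simp: laurent_one_def laurent_monom_def)
  show ?case
    unfolding laurent_pow.simps one by (rule vanishing_laurent_monom)
next
  case (Suc m)
  then show ?case
    by (simp add: vanishing_laurent_mult assms)
qed

lemma laurent_pow_monom: "laurent_pow av (laurent_monom a x) m = laurent_monom (int m * a) (x ^ m)"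
proof (induction m)
  case 0
  then show ?case
    by (auto simp: laurent_one_def laurent_monom_def)
next
  case (Suc m)
  then show ?case
    by (simp add: laurent_monom_mult algebra_simps)
qed

lemma vanishing_laurent_deriv:
  assumes "vanishing av F" shows "vanishing av (laurent_deriv F)"
proof (rule vanishing_le[OF assms])
  fix k
  have "av (laurent_deriv F k) = av (of_int k) * av (F k)"
    by (simp add: laurent_deriv_def av_mult)
  also have "\<dots> \<le> av (F k)"
    using av_of_int_le_1 av_nonneg by (simp add: mult_left_le_one_le)
  finally show "av (laurent_deriv F k) \<le> av (F k)" .
qed

lemma laurent_deriv_mult:
  assumes "vanishing av F" "vanishing av G"
  shows "laurent_deriv (laurent_mult av F G)
    = (\<lambda>n. laurent_mult av (laurent_deriv F) G n + laurent_mult av F (laurent_deriv G) n)"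
proof
  fix n
  have "laurent_deriv (laurent_mult av F G) n = zsum av (\<lambda>k. of_int n * (F k * G (n - k)))"
    unfolding laurent_deriv_def laurent_mult_eq_zsum
    by (rule zsum_cmult[OF vanishing_convolution_term[OF assms], symmetric])
  also have "(\<lambda>k. of_int n * (F k * G (n - k)))
      = (\<lambda>k. laurent_deriv F k * G (n - k) + F k * laurent_deriv G (n - k))"
    by (auto simp: laurent_deriv_def algebra_simps)
  also have "zsum av \<dots> = laurent_mult av (laurent_deriv F) G n + laurent_mult av F (laurent_deriv G) n"
    unfolding laurent_mult_eq_zsum
    using assms vanishing_laurent_deriv by (intro zsum_add vanishing_convolution_term)
  finally show "laurent_deriv (laurent_mult av F G) n
      = laurent_mult av (laurent_deriv F) G n + laurent_mult av F (laurent_deriv G) n" .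
qed

lemma laurent_deriv_pow:
  assumes f: "vanishing av f"
  shows "laurent_deriv (laurent_pow av f (Suc m))
    = (\<lambda>n. of_nat (Suc m) * laurent_mult av (laurent_pow av f m) (laurent_deriv f) n)"
proof (induction m)
  case 0
  show ?case
    by (simp add: laurent_one_mult)
next
  case (Suc m)
  let ?P = "laurent_pow av f" and ?g = "laurent_deriv f"
  have P: "vanishing av (?P j)" for j
    using f by (rule vanishing_laurent_pow)
  have g: "vanishing av ?g"
    using f by (rule vanishing_laurent_deriv)
  have "laurent_mult av (laurent_mult av (?P m) ?g) f = laurent_mult av (?P m) (laurent_mult av f ?g)"
    by (simp add: laurent_mult_assoc[OF P g f] laurent_mult_commute[OF g f])
  also have "\<dots> = laurent_mult av (?P (Suc m)) ?g"
    by (simp add: laurent_mult_assoc[OF P f g])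
  finally have swap: "laurent_mult av (laurent_mult av (?P m) ?g) f = laurent_mult av (?P (Suc m)) ?g" .
  have "laurent_deriv (?P (Suc (Suc m)))
      = (\<lambda>n. laurent_mult av (laurent_deriv (?P (Suc m))) f n + laurent_mult av (?P (Suc m)) ?g n)"
    unfolding laurent_pow.simps(2)[of av f "Suc m"] by (rule laurent_deriv_mult[OF P f])
  also have "laurent_mult av (laurent_deriv (?P (Suc m))) f
      = (\<lambda>n. of_nat (Suc m) * laurent_mult av (?P (Suc m)) ?g n)"
    unfolding Suc.IH laurent_mult_cmult_left[OF vanishing_laurent_mult[OF P g] f] swap ..
  finally show ?case
    by (simp add: algebra_simps)
qed

lemma vanishing_laurent_subst_pow:
  assumes "q > 0" "vanishing av F" shows "vanishing av (laurent_subst_pow F q)"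
  unfolding vanishing_def
proof (intro allI impI)
  fix e :: real assume "e > 0"
  then obtain M where M: "\<forall>k. M < \<bar>k\<bar> \<longrightarrow> av (F k) \<le> e"
    using assms unfolding vanishing_def by blast
  have "av (laurent_subst_pow F q k) \<le> e" if k: "int q * \<bar>M\<bar> < \<bar>k\<bar>" for k
  proof (cases "int q dvd k")
    case True
    then obtain m where m: "k = int q * m" ..
    then have "\<bar>M\<bar> < \<bar>m\<bar>"
      using k \<open>q > 0\<close> by (simp add: abs_mult mult_less_cancel_left)
    then show ?thesis
      using M m \<open>q > 0\<close> by (auto simp: laurent_subst_pow_def)
  next
    case False
    then show ?thesis
      using \<open>e > 0\<close> by (simp add: laurent_subst_pow_def)
  qed
  then show "\<exists>M. \<forall>k. M < \<bar>k\<bar> \<longrightarrow> av (laurent_subst_pow F q k) \<le> e"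
    by blast
qed

lemma laurent_deriv_mult_subst_pow_commute:
  assumes f: "vanishing av f" and "q > 0" and frob: "laurent_pow av f q = laurent_subst_pow f q"
  shows "laurent_mult av (laurent_deriv f) (laurent_subst_pow f q)
    = laurent_mult av (laurent_subst_pow (laurent_deriv f) q) f"
proof -
  let ?P = "laurent_pow av f" and ?g = "laurent_deriv f"
  have P: "vanishing av (?P j)" for j
    using f by (rule vanishing_laurent_pow)
  have g: "vanishing av ?g"
    using f by (rule vanishing_laurent_deriv)
  have P_q: "?P q = laurent_mult av (?P (q - 1)) f"
    using \<open>q > 0\<close> by (cases q) simp_all
  have "(\<lambda>n. of_nat q * laurent_subst_pow ?g q n) = laurent_deriv (?P q)"
    unfolding frob using \<open>q > 0\<close> by (rule laurent_deriv_subst_pow[symmetric])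
  also have "\<dots> = (\<lambda>n. of_nat q * laurent_mult av (?P (q - 1)) ?g n)"
    using laurent_deriv_pow[OF f, of "q - 1"] \<open>q > 0\<close> by simp
  finally have g_q: "laurent_subst_pow ?g q = laurent_mult av (?P (q - 1)) ?g"
    using \<open>q > 0\<close> by (simp add: fun_eq_iff)
  have "laurent_mult av (laurent_subst_pow ?g q) f = laurent_mult av (?P (q - 1)) (laurent_mult av ?g f)"
    unfolding g_q by (rule laurent_mult_assoc[OF P g f])
  also have "\<dots> = laurent_mult av (?P q) ?g"
    unfolding laurent_mult_commute[OF g f] P_q by (rule laurent_mult_assoc[OF P f g, symmetric])
  also have "\<dots> = laurent_mult av ?g (laurent_subst_pow f q)"
    unfolding frob by (rule laurent_mult_commute[OF vanishing_laurent_subst_pow[OF \<open>q > 0\<close> f] g])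
  finally show ?thesis ..
qed

lemma special_laurent_monom_if_pow_eq_subst_pow:
  assumes "q > 1" "x \<noteq> 0"
    and "laurent_pow av (laurent_monom m x) q = laurent_subst_pow (laurent_monom m x) q"
  shows "special (laurent_monom m x)"
proof -
  have "x ^ q = x"
    using fun_cong[OF assms(3)[unfolded laurent_pow_monom], of "int q * m"] \<open>q > 1\<close>
    by (simp add: laurent_monom_def laurent_subst_pow_def)
  then have "x ^ (q - 1) = 1"
    using power_minus_mult[of q x] \<open>q > 1\<close> \<open>x \<noteq> 0\<close> by simp
  then have "x \<in> roots_of_unity"
    unfolding roots_of_unity_def using \<open>q > 1\<close> by (intro CollectI exI[of _ "q - 1"]) simp
  then show ?thesis
    unfolding special_def laurent_monom_def by blast
qed

lemma laurent_eval_to_zero: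
  assumes "laurent_eval_to av (\<lambda>_. 0) z v" shows "v = 0"
proof -
  have "av_lim av (\<lambda>_. 0) v"
    using assms unfolding laurent_eval_to_def by simp
  moreover have "av_lim av (\<lambda>_. 0) 0"
    by (rule av_lim_eventually_const[of 0]) simp
  ultimately show ?thesis
    by (rule av_lim_unique)
qed

end

section \<open>Leading terms for the Gauss norm\<close>

definition gauss_lead :: "('a \<Rightarrow> real) \<Rightarrow> (int \<Rightarrow> 'a) \<Rightarrow> int \<Rightarrow> real \<Rightarrow> bool" where
  "gauss_lead av F a T \<longleftrightarrow>
     T > 0 \<and> av (F a) = T \<and> (\<forall>n. av (F n) \<le> T) \<and> (\<forall>n<a. av (F n) < T)"

lemma gauss_lead_unique:
  assumes "gauss_lead av F a T" "gauss_lead av F b S" shows "a = b"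
proof (rule ccontr)
  assume "a \<noteq> b"
  have "T = S"
    using assms unfolding gauss_lead_def by (metis order_antisym)
  from \<open>a \<noteq> b\<close> have "a < b \<or> b < a" by linarith
  then show False
    using assms \<open>T = S\<close> unfolding gauss_lead_def by auto
qed

context nonarch_complete_field
begin

lemma gauss_lead_subst_pow:
  assumes "q > 0" "gauss_lead av F a T"
  shows "gauss_lead av (laurent_subst_pow F q) (int q * a) T"
proof -
  have T: "T > 0" "av (F a) = T" "\<And>n. av (F n) \<le> T" "\<And>n. n < a \<Longrightarrow> av (F n) < T"
    using assms(2) unfolding gauss_lead_def by auto
  have "av (laurent_subst_pow F q n) < T" if "n < int q * a" for n
  proof (cases "int q dvd n")
    case True
    then obtain m where m: "n = int q * m" ..
    then have "m < a"
      using that \<open>q > 0\<close> by (simp add: mult_less_cancel_left)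
    then show ?thesis
      using T(4) m \<open>q > 0\<close> by (simp add: laurent_subst_pow_def)
  next
    case False
    then show ?thesis
      using T by (simp add: laurent_subst_pow_def)
  qed
  then show ?thesis
    unfolding gauss_lead_def using T \<open>q > 0\<close> by (simp add: laurent_subst_pow_def)
qed

lemma gauss_lead_exists:
  assumes F: "vanishing av F" and "F \<noteq> (\<lambda>_. 0)"
  shows "\<exists>a T. gauss_lead av F a T"
proof -
  obtain k0 where k0: "\<forall>k. av (F k) \<le> av (F k0)"
    using vanishing_max_attained[OF F] by blast
  define T where "T = av (F k0)"
  obtain n0 where "F n0 \<noteq> 0"
    using assms(2) by auto
  then have "0 < av (F n0)"
    by (rule av_pos)
  also have "\<dots> \<le> T"
    using k0 by (simp add: T_def)
  finally have "T > 0" .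
  define A where "A = {k. av (F k) = T}"
  have "A \<subseteq> {k. T \<le> av (F k)}"
    by (auto simp: A_def)
  then have "finite A"
    using vanishing_finite_ge[OF F \<open>T > 0\<close>] by (rule finite_subset)
  moreover have "k0 \<in> A"
    by (simp add: A_def T_def)
  ultimately have "Min A \<in> A"
    by (intro Min_in) auto
  have "av (F n) < T" if "n < Min A" for n
  proof -
    have "n \<notin> A"
      using Min_le[OF \<open>finite A\<close>] that by fastforce
    then show ?thesis
      using k0 by (simp add: A_def T_def order_less_le)
  qed
  then have "gauss_lead av F (Min A) T"
    unfolding gauss_lead_def using \<open>T > 0\<close> \<open>Min A \<in> A\<close> k0 by (simp add: A_def T_def)
  then show ?thesis
    by blast
qed

lemma av_mult_less_gauss_lead:
  assumes lF: "gauss_lead av F a T" and lG: "gauss_lead av G b S" and "i < a \<or> j < b"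
  shows "av (F i * G j) < T * S"
proof -
  have T: "T > 0" "\<And>n. av (F n) \<le> T" "\<And>n. n < a \<Longrightarrow> av (F n) < T"
    using lF unfolding gauss_lead_def by auto
  have S: "S > 0" "\<And>n. av (G n) \<le> S" "\<And>n. n < b \<Longrightarrow> av (G n) < S"
    using lG unfolding gauss_lead_def by auto
  show ?thesis
  proof (cases "i < a")
    case True
    have "av (F i) * av (G j) \<le> av (F i) * S"
      using S av_nonneg by (intro mult_left_mono) auto
    also have "\<dots> < T * S"
      using T(3)[OF True] S by simp
    finally show ?thesis by (simp add: av_mult)
  next
    case False
    then have "j < b"
      using assms(3) by simp
    have "av (F i) * av (G j) \<le> T * av (G j)"
      using T av_nonneg by (intro mult_right_mono) auto
    also have "\<dots> < T * S"
      using S(3)[OF \<open>j < b\<close>] T by simp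
    finally show ?thesis by (simp add: av_mult)
  qed
qed

lemma gauss_lead_mult:
  assumes F: "vanishing av F" and G: "vanishing av G"
    and lF: "gauss_lead av F a T" and lG: "gauss_lead av G b S"
  shows "gauss_lead av (laurent_mult av F G) (a + b) (T * S)"
proof -
  have T: "T > 0" "av (F a) = T" "\<And>n. av (F n) \<le> T"
    using lF unfolding gauss_lead_def by auto
  have S: "S > 0" "av (G b) = S" "\<And>n. av (G n) \<le> S"
    using lG unfolding gauss_lead_def by auto
  have terms: "vanishing av (\<lambda>k. F k * G (n - k))" for n
    using F G by (rule vanishing_convolution_term)
  have "av (zsum av (\<lambda>k. F k * G (a + b - k))) = av (F a * G (a + b - a))"
  proof (rule av_zsum_dominant[where c = "\<lambda>k. F k * G (a + b - k)" and a = a, OF terms])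
    fix k assume "k \<noteq> a"
    then have "k < a \<or> a + b - k < b"
      by linarith
    then show "av (F k * G (a + b - k)) < av (F a * G (a + b - a))"
      using av_mult_less_gauss_lead[OF lF lG] T S by (simp add: av_mult)
  qed
  then have "av (laurent_mult av F G (a + b)) = T * S"
    using T S by (simp add: laurent_mult_eq_zsum av_mult)
  moreover have "av (laurent_mult av F G n) \<le> T * S" for n
    unfolding laurent_mult_eq_zsum using T S av_nonneg
    by (intro av_zsum_le[OF terms]) (auto simp: av_mult intro: mult_mono)
  moreover have "av (laurent_mult av F G n) < T * S" if "n < a + b" for n
    unfolding laurent_mult_eq_zsum using that
    by (intro av_zsum_less[OF terms] av_mult_less_gauss_lead[OF lF lG]) linarith
  ultimately show ?thesis
    unfolding gauss_lead_def using T S by simp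
qed

lemma mult_subst_pow_commute_diff:
  assumes "q > 0" and F: "vanishing av F" and H: "vanishing av H"
    and comm: "laurent_mult av H (laurent_subst_pow F q) = laurent_mult av (laurent_subst_pow H q) F"
  shows "laurent_mult av (\<lambda>n. H n - c * F n) (laurent_subst_pow F q)
    = laurent_mult av (laurent_subst_pow (\<lambda>n. H n - c * F n) q) F"
proof -
  have F_q: "vanishing av (laurent_subst_pow F q)"
    using \<open>q > 0\<close> F by (rule vanishing_laurent_subst_pow)
  have H_q: "vanishing av (laurent_subst_pow H q)"
    using \<open>q > 0\<close> H by (rule vanishing_laurent_subst_pow)
  have "laurent_mult av (\<lambda>n. H n - c * F n) (laurent_subst_pow F q)
      = (\<lambda>n. laurent_mult av H (laurent_subst_pow F q) n - c * laurent_mult av F (laurent_subst_pow F q) n)"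
    by (rule laurent_mult_diff_left[OF H F F_q])
  also have "\<dots> = (\<lambda>n. laurent_mult av (laurent_subst_pow H q) F n - c * laurent_mult av (laurent_subst_pow F q) F n)"
    unfolding comm laurent_mult_commute[OF F F_q] ..
  also have "\<dots> = laurent_mult av (\<lambda>n. laurent_subst_pow H q n - c * laurent_subst_pow F q n) F"
    by (rule laurent_mult_diff_left[OF H_q F_q F, symmetric])
  finally show ?thesis
    unfolding laurent_subst_pow_diff .
qed

lemma eq_0_if_mult_subst_pow_commute:
  assumes q: "q > 1" and F: "vanishing av F" and lF: "gauss_lead av F a T"
    and H: "vanishing av H" and "H a = 0"
    and comm: "laurent_mult av H (laurent_subst_pow F q) = laurent_mult av (laurent_subst_pow H q) F"
  shows "H = (\<lambda>_. 0)"
proof (rule ccontr)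
  assume "H \<noteq> (\<lambda>_. 0)"
  then obtain b S where lH: "gauss_lead av H b S"
    using gauss_lead_exists[OF H] by blast
  have "q > 0"
    using q by simp
  have "gauss_lead av (laurent_mult av H (laurent_subst_pow F q)) (b + int q * a) (S * T)"
    using H vanishing_laurent_subst_pow[OF \<open>q > 0\<close> F] lH gauss_lead_subst_pow[OF \<open>q > 0\<close> lF]
    by (rule gauss_lead_mult)
  moreover have "gauss_lead av (laurent_mult av H (laurent_subst_pow F q)) (int q * b + a) (S * T)"
    unfolding comm using vanishing_laurent_subst_pow[OF \<open>q > 0\<close> H] F gauss_lead_subst_pow[OF \<open>q > 0\<close> lH] lF
    by (rule gauss_lead_mult)
  ultimately have "b + int q * a = int q * b + a"
    by (rule gauss_lead_unique)
  then have "(int q - 1) * (b - a) = 0"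
    by (simp add: algebra_simps)
  then have "b = a"
    using q by simp
  then show False
    using lH \<open>H a = 0\<close> unfolding gauss_lead_def by auto
qed

lemma proportional_if_mult_subst_pow_commute:
  assumes q: "q > 1" and F: "vanishing av F" and H: "vanishing av H" and "F \<noteq> (\<lambda>_. 0)"
    and comm: "laurent_mult av H (laurent_subst_pow F q) = laurent_mult av (laurent_subst_pow H q) F"
  shows "\<exists>c. \<forall>n. H n = c * F n"
proof -
  obtain a T where lF: "gauss_lead av F a T"
    using gauss_lead_exists[OF F \<open>F \<noteq> (\<lambda>_. 0)\<close>] by blast
  then have "F a \<noteq> 0"
    unfolding gauss_lead_def by auto
  define c where "c = H a / F a"
  have "(\<lambda>n. H n - c * F n) = (\<lambda>_. 0)"
  proof (rule eq_0_if_mult_subst_pow_commute[OF q F lF])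
    show "vanishing av (\<lambda>n. H n - c * F n)"
      using vanishing_add[OF H vanishing_cmult[OF F, of "- c"]] by simp
    show "H a - c * F a = 0"
      using \<open>F a \<noteq> 0\<close> by (simp add: c_def)
    show "laurent_mult av (\<lambda>n. H n - c * F n) (laurent_subst_pow F q)
      = laurent_mult av (laurent_subst_pow (\<lambda>n. H n - c * F n) q) F"
      using q F H comm by (intro mult_subst_pow_commute_diff) auto
  qed
  then show ?thesis
    by (intro exI[of _ c]) (simp add: fun_eq_iff)
qed

end

lemma is_Cp_imp_nonarch_complete_field:
  assumes "is_Cp p av" shows "nonarch_complete_field av"
  by unfold_locales (use assms in \<open>auto simp: is_Cp_def\<close>)

lemma A_K11_imp_vanishing:
  assumes "A_K11 av K f" shows "vanishing av f"
  unfolding vanishing_def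
proof (intro allI impI)
  fix e :: real assume "e > 0"
  then obtain N :: nat where "\<forall>n. \<bar>n\<bar> \<ge> int N \<longrightarrow> av (f n) < e"
    using assms unfolding A_K11_def by blast
  then show "\<exists>M. \<forall>k. M < \<bar>k\<bar> \<longrightarrow> av (f k) \<le> e"
    by (intro exI[of _ "int N"]) (auto intro: less_imp_le)
qed

lemma roots_of_unity_nonzero: "z \<in> roots_of_unity \<Longrightarrow> z \<noteq> 0"
  unfolding roots_of_unity_def by (auto simp: power_0_left)

theorem mainTheorem5:
  fixes p q :: nat and av :: "'a::field_char_0 \<Rightarrow> real" and K :: "'a set"
    and f :: "int \<Rightarrow> 'a" and \<zeta> \<zeta>' :: 'a
  assumes "is_Cp p av"
    and "padic_number_field av K"
    and "A_K11 av K f"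
    and "\<exists>k\<ge>1. q = p ^ k"
    and "\<zeta> \<in> roots_of_unity" and "\<zeta>' \<in> roots_of_unity"
    and "laurent_eval_to av f \<zeta> \<zeta>'"
    and "laurent_pow av f q = laurent_subst_pow f q"
  shows "special f"
proof -
  interpret nonarch_complete_field av
    using assms(1) by (rule is_Cp_imp_nonarch_complete_field)
  obtain k where "k \<ge> 1" "q = p ^ k"
    using assms(4) by blast
  moreover have "p > 1"
    using assms(1) prime_gt_1_nat unfolding is_Cp_def by blast
  ultimately have q: "q > 1"
    using one_less_power[of p k] by simp
  have f: "vanishing av f"
    using assms(3) by (rule A_K11_imp_vanishing)
  have "f \<noteq> (\<lambda>_. 0)"
    using assms(6,7) laurent_eval_to_zero roots_of_unity_nonzero by blast
  then obtain m where m: "f m \<noteq> 0"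
    by auto
  obtain c where "\<forall>n. laurent_deriv f n = c * f n"
    using proportional_if_mult_subst_pow_commute[OF q f vanishing_laurent_deriv[OF f] \<open>f \<noteq> (\<lambda>_. 0)\<close>]
      laurent_deriv_mult_subst_pow_commute[OF f _ assms(8)] q by auto
  then have "f = laurent_monom m (f m)"
    using m by (intro eq_laurent_monom_if_deriv_proportional) auto
  then obtain \<eta> where "f = laurent_monom m \<eta>" "\<eta> \<noteq> 0"
    using m by blast
  then show ?thesis
    using special_laurent_monom_if_pow_eq_subst_pow[OF q \<open>\<eta> \<noteq> 0\<close>] assms(8) by simp
qed

end
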